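(* Let $S_\lambda\in\mathcal B(\ell^2(V))$ be a weighted shift on a directed tree $\mathcal T=(V,E)$ with weights $\lambda=\{\lambda_v\}_{v\in V^\circ}$. Then $S_\lambda^*S_\lambda(\ker S_\lambda^* )\subseteq\ker S_\lambda^*$ if and only if there exists a family $\{\alpha_v\}_{v\in V^+_\lambda}\subseteq\mathbb R_+$ with $\|S_\lambda e_u\|=\alpha_{\mathrm{par}(u)}$ for all $u\in V^\circ$ with $\lambda_u\neq0$. Moreover, if $\mathcal T$ is leafless and all weights are nonzero, this is equivalent to the existence of $\{\alpha_v\}_{v\in V}\subseteq\mathbb R_+$ with $\|S_\lambda e_u\|=\alpha_{\mathrm{par}(u)}$ for all $u\in V^\circ$.
   Context: A directed tree $\mathcal T=(V,E)$ is a connected directed graph without circuits in which each vertex has at most one parent; a root is a vertex without parent (at most one exists). $V^\circ=V$ if $\mathcal T$ is rootless and $V^\circ=V\setminus\{\omega\}$ if $\omega$ is the root. For $v\in V^\circ$, $\mathrm{par}(v)$ is the unique $u$ with $(u,v)\in E$; $\mathrm{Chi}(u)=\{v:(u,v)\in E\}$; $\mathcal T$ is leafless if $\mathrm{Chi}(u)\neq\emptyset$ for all $u$. $e_u$ is the indicator of $\{u\}$ in $\ell^2(V)$. The weighted shift with weights $\lambda$ is $(S_\lambda f)(v)=\lambda_vf(\mathrm{par}(v))$ for $v\in V^\circ$ and $(S_\lambda f)(\omega)=0$ at the root; it is bounded iff $\sup_u\sum_{v\in\mathrm{Chi}(u)}|\lambda_v|^2<\infty$, and then $\|S_\lambda e_u\|^2=\sum_{v\in\mathrm{Chi}(u)}|\lambda_v|^2$.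 $V^+_\lambda=\{u\in V:\|S_\lambda e_u\|>0\}$. *)

theory Defs
  imports "HOL-Analysis.Analysis"
begin

text \<open>The vertex set V is the (arbitrary) type 'v; the edge set is
  E :: ('v \<times> 'v) set. Following Jablonski--Jung--Stochel: a directed graph has no
  loops, a directed tree is connected (in the undirected sense), has no (directed)
  circuits, and each vertex has at most one parent.\<close>

definition directed_tree :: "('v \<times> 'v) set \<Rightarrow> bool" where
  "directed_tree E \<longleftrightarrow>
     (\<forall>u v. (u, v) \<in> E \<longrightarrow> u \<noteq> v) \<and>
     (\<forall>u v. (u, v) \<in> (E \<union> E\<inverse>)\<^sup>*) \<and>
     acyclic E \<and>
     (\<forall>u1 u2 v. (u1, v) \<in> E \<and> (u2, v) \<in> E \<longrightarrow> u1 = u2)"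

definition Vcirc :: "('v \<times> 'v) set \<Rightarrow> 'v set" where
  "Vcirc E = {v. \<exists>u. (u, v) \<in> E}"

definition par :: "('v \<times> 'v) set \<Rightarrow> 'v \<Rightarrow> 'v" where
  "par E v = (THE u. (u, v) \<in> E)"

definition Chi :: "('v \<times> 'v) set \<Rightarrow> 'v \<Rightarrow> 'v set" where
  "Chi E u = {v. (u, v) \<in> E}"

definition leafless :: "('v \<times> 'v) set \<Rightarrow> bool" where
  "leafless E \<longleftrightarrow> (\<forall>u. Chi E u \<noteq> {})"

definition ell2 :: "('v \<Rightarrow> complex) set" where
  "ell2 = {f. (\<lambda>v. (cmod (f v))\<^sup>2) summable_on UNIV}"

definition ell2_norm :: "('v \<Rightarrow> complex) \<Rightarrow> real" where
  "ell2_norm f = sqrt (\<Sum>\<^sub>\<infinity>v. (cmod (f v))\<^sup>2)"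

definition ell2_inner :: "('v \<Rightarrow> complex) \<Rightarrow> ('v \<Rightarrow> complex) \<Rightarrow> complex" where
  "ell2_inner f g = (\<Sum>\<^sub>\<infinity>v. f v * cnj (g v))"

definition evec :: "'v \<Rightarrow> 'v \<Rightarrow> complex" where
  "evec u = (\<lambda>v. if v = u then 1 else 0)"

definition ell2_bounded :: "(('v \<Rightarrow> complex) \<Rightarrow> ('v \<Rightarrow> complex)) \<Rightarrow> bool" where
  "ell2_bounded T \<longleftrightarrow>
     (\<forall>f\<in>ell2. T f \<in> ell2) \<and>
     (\<forall>f\<in>ell2. \<forall>g\<in>ell2. \<forall>a b. T (\<lambda>v. a * f v + b * g v) = (\<lambda>v. a * T f v + b * T g v)) \<and>
     (\<exists>C. \<forall>f\<in>ell2. ell2_norm (T f) \<le> C * ell2_norm f)"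

definition ell2_adj :: "(('v \<Rightarrow> complex) \<Rightarrow> ('v \<Rightarrow> complex)) \<Rightarrow> ('v \<Rightarrow> complex) \<Rightarrow> ('v \<Rightarrow> complex)" where
  "ell2_adj T g = (THE h. h \<in> ell2 \<and> (\<forall>f\<in>ell2. ell2_inner (T f) g = ell2_inner f h))"

definition ell2_ker :: "(('v \<Rightarrow> complex) \<Rightarrow> ('v \<Rightarrow> complex)) \<Rightarrow> ('v \<Rightarrow> complex) set" where
  "ell2_ker T = {g \<in> ell2. T g = (\<lambda>_. 0)}"

text \<open>Only the values of \<open>lam\<close> on \<open>V\<degree>\<close> matter.\<close>
definition wshift :: "('v \<times> 'v) set \<Rightarrow> ('v \<Rightarrow> complex) \<Rightarrow> ('v \<Rightarrow> complex) \<Rightarrow> ('v \<Rightarrow> complex)" where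
  "wshift E lam f = (\<lambda>v. if v \<in> Vcirc E then lam v * f (par E v) else 0)"

definition Vplus :: "('v \<times> 'v) set \<Rightarrow> ('v \<Rightarrow> complex) \<Rightarrow> 'v set" where
  "Vplus E lam = {u. ell2_norm (wshift E lam (evec u)) > 0}"

end

theory Submission
  imports Defs
begin

text \<open>The adjoint of \<open>S\<close> sums over children, \<open>(S\<^sup>* g)(u) = \<Sum>\<^bsub>v \<in> Chi(u)\<^esub> cnj(\<lambda>\<^sub>v) g(v)\<close>,
  so \<open>S\<^sup>*S\<close> is the diagonal operator multiplying by \<open>\<parallel>S e\<^sub>u\<parallel>\<^sup>2\<close>. If \<open>\<parallel>S e\<^sub>v\<parallel>\<close> is constant
  on the children \<open>v\<close> of each vertex that carry a nonzero weight, this constant factors out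
  of \<open>S\<^sup>*(S\<^sup>*S g)(u) = \<Sum>\<^bsub>v \<in> Chi(u)\<^esub> cnj(\<lambda>\<^sub>v) \<parallel>S e\<^sub>v\<parallel>\<^sup>2 g(v)\<close>, which therefore vanishes
  together with \<open>S\<^sup>* g\<close>. If two such siblings \<open>v\<^sub>1, v\<^sub>2\<close> have different norms, then
  \<open>e\<^bsub>v\<^sub>1\<^esub> / cnj(\<lambda>\<^bsub>v\<^sub>1\<^esub>) - e\<^bsub>v\<^sub>2\<^esub> / cnj(\<lambda>\<^bsub>v\<^sub>2\<^esub>)\<close> lies in \<open>ker S\<^sup>*\<close> but its image under \<open>S\<^sup>*S\<close>
  does not. Constancy on such siblings says exactly that \<open>\<parallel>S e\<^sub>u\<parallel>\<close> is a function of
  \<open>par(u)\<close> wherever \<open>\<lambda>\<^sub>u \<noteq> 0\<close>.\<close>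

subsection \<open>Cauchy--Schwarz for unordered sums\<close>

lemma summable_on_mult_of_square_summable:
  fixes a b :: "'a \<Rightarrow> real"
  assumes "(\<lambda>x. (a x)\<^sup>2) summable_on A" and "(\<lambda>x. (b x)\<^sup>2) summable_on A"
  shows "(\<lambda>x. a x * b x) summable_on A"
proof -
  have "(\<lambda>x. ((a x)\<^sup>2 + (b x)\<^sup>2) / 2) summable_on A"
    using summable_on_cmult_left[OF summable_on_add[OF assms], of "1/2"] by simp
  hence "(\<lambda>x. norm (a x * b x)) summable_on A"
  proof (rule summable_on_comparison_test)
    show "norm (a x * b x) \<le> ((a x)\<^sup>2 + (b x)\<^sup>2) / 2" for x
      using sum_squares_bound[of "\<bar>a x\<bar>" "\<bar>b x\<bar>"] by (simp add: abs_mult)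
  qed simp
  thus ?thesis
    by (rule abs_summable_summable)
qed

lemma infsum_Cauchy_Schwarz:
  fixes a b :: "'a \<Rightarrow> real"
  assumes "\<And>x. x \<in> A \<Longrightarrow> a x \<ge> 0" and "\<And>x. x \<in> A \<Longrightarrow> b x \<ge> 0"
    and sa: "(\<lambda>x. (a x)\<^sup>2) summable_on A" and sb: "(\<lambda>x. (b x)\<^sup>2) summable_on A"
  shows "(\<Sum>\<^sub>\<infinity>x\<in>A. a x * b x)\<^sup>2 \<le> (\<Sum>\<^sub>\<infinity>x\<in>A. (a x)\<^sup>2) * (\<Sum>\<^sub>\<infinity>x\<in>A. (b x)\<^sup>2)"
proof -
  let ?Sa = "\<Sum>\<^sub>\<infinity>x\<in>A. (a x)\<^sup>2" and ?Sb = "\<Sum>\<^sub>\<infinity>x\<in>A. (b x)\<^sup>2"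
  have "(\<Sum>\<^sub>\<infinity>x\<in>A. a x * b x) \<le> sqrt (?Sa * ?Sb)"
  proof (rule infsum_le_finite_sums)
    show "(\<lambda>x. a x * b x) summable_on A"
      using sa sb by (rule summable_on_mult_of_square_summable)
    fix F assume F: "finite F" "F \<subseteq> A"
    have "(\<Sum>x\<in>F. a x * b x)\<^sup>2 \<le> (\<Sum>x\<in>F. (a x)\<^sup>2) * (\<Sum>x\<in>F. (b x)\<^sup>2)"
      by (rule Cauchy_Schwarz_ineq_sum)
    also have "\<dots> \<le> ?Sa * ?Sb"
      using F by (intro mult_mono finite_sum_le_infsum sa sb sum_nonneg infsum_nonneg) auto
    finally show "(\<Sum>x\<in>F. a x * b x) \<le> sqrt (?Sa * ?Sb)"
      by (rule real_le_rsqrt)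
  qed
  moreover have "0 \<le> (\<Sum>\<^sub>\<infinity>x\<in>A. a x * b x)"
    using assms(1,2) by (intro infsum_nonneg) simp
  ultimately have "(\<Sum>\<^sub>\<infinity>x\<in>A. a x * b x)\<^sup>2 \<le> (sqrt (?Sa * ?Sb))\<^sup>2"
    by (rule power_mono)
  also have "\<dots> = ?Sa * ?Sb"
    by (simp add: infsum_nonneg)
  finally show ?thesis .
qed

lemma infsum_finite_support:
  fixes t :: "'a \<Rightarrow> 'b::{comm_monoid_add,t2_space}"
  assumes "finite F" and "\<And>v. v \<notin> F \<Longrightarrow> t v = 0"
  shows "infsum t A = sum t (A \<inter> F)"
proof -
  have "infsum t A = infsum t (A \<inter> F)"
    by (rule infsum_cong_neutral) (use assms in auto)
  also have "\<dots> = sum t (A \<inter> F)"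
    using assms by simp
  finally show ?thesis .
qed

lemma ell2_finite_support:
  assumes "finite F" and "\<And>v. v \<notin> F \<Longrightarrow> f v = 0"
  shows "f \<in> ell2"
proof -
  have "finite {x\<in>UNIV. (cmod (f x))\<^sup>2 \<noteq> 0}"
    using assms by (auto intro: finite_subset)
  thus ?thesis
    unfolding ell2_def by (simp add: finite_nonzero_values_imp_summable_on)
qed

lemma ell2_square_summable_on: "g \<in> ell2 \<Longrightarrow> (\<lambda>v. (cmod (g v))\<^sup>2) summable_on A"
  unfolding ell2_def by (auto intro: summable_on_subset)

lemma evec_ell2: "evec u \<in> ell2"
  by (rule ell2_finite_support[of "{u}"]) (auto simp: evec_def)

lemma ell2_norm_evec: "ell2_norm (evec u) = 1"
  unfolding ell2_norm_def by (subst infsum_finite_support[of "{u}"]) (auto simp: evec_def)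

lemma ell2_inner_evec_left: "ell2_inner (evec w) h = cnj (h w)"
  unfolding ell2_inner_def by (subst infsum_finite_support[of "{w}"]) (auto simp: evec_def)

lemma directed_tree_parent_unique:
  "directed_tree E \<Longrightarrow> (u1, v) \<in> E \<Longrightarrow> (u2, v) \<in> E \<Longrightarrow> u1 = u2"
  unfolding directed_tree_def by blast

subsection \<open>Weighted shifts on graphs with unique parents\<close>

locale bounded_weighted_shift =
  fixes E :: "('v \<times> 'v) set" and lam :: "'v \<Rightarrow> complex"
  assumes parent_unique: "(u1, v) \<in> E \<Longrightarrow> (u2, v) \<in> E \<Longrightarrow> u1 = u2"
    and bounded: "ell2_bounded (wshift E lam)"
begin

abbreviation S where "S \<equiv> wshift E lam"

lemma par_eq: "(u, v) \<in> E \<Longrightarrow> par E v = u"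
  unfolding par_def by (rule the_equality) (auto intro: parent_unique)

lemma Vcirc_iff: "v \<in> Vcirc E \<longleftrightarrow> (par E v, v) \<in> E"
  unfolding Vcirc_def by (auto simp: par_eq)

lemma wshift_apply_edge: "(u, v) \<in> E \<Longrightarrow> S f v = lam v * f u"
  unfolding wshift_def Vcirc_def by (auto simp: par_eq)

lemma wshift_evec: "S (evec u) v = (if (u, v) \<in> E then lam v else 0)"
proof -
  have "v \<in> Vcirc E \<and> par E v = u \<longleftrightarrow> (u, v) \<in> E"
    by (metis Vcirc_iff par_eq)
  thus ?thesis
    unfolding wshift_def evec_def by auto
qed

lemma wshift_ell2: "f \<in> ell2 \<Longrightarrow> S f \<in> ell2"
  using bounded unfolding ell2_bounded_def by blast

definition sqnorm :: "'v \<Rightarrow> real" where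
  "sqnorm u = (\<Sum>\<^sub>\<infinity>v\<in>Chi E u. (cmod (lam v))\<^sup>2)"

lemma sqnorm_nonneg: "sqnorm u \<ge> 0"
  unfolding sqnorm_def by (rule infsum_nonneg) simp

lemma weights_square_summable: "(\<lambda>v. (cmod (lam v))\<^sup>2) summable_on Chi E u"
proof -
  have "(\<lambda>v. (cmod (S (evec u) v))\<^sup>2) summable_on Chi E u"
    using wshift_ell2[OF evec_ell2] by (rule ell2_square_summable_on)
  thus ?thesis
    by (rule summable_on_cong[THEN iffD1, rotated]) (simp add: wshift_evec Chi_def)
qed

lemma norm_wshift_evec: "ell2_norm (S (evec u)) = sqrt (sqnorm u)"
proof -
  have "(\<Sum>\<^sub>\<infinity>v. (cmod (S (evec u) v))\<^sup>2) = sqnorm u"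
    unfolding sqnorm_def by (rule infsum_cong_neutral) (auto simp: wshift_evec Chi_def)
  thus ?thesis
    unfolding ell2_norm_def by simp
qed

lemma sqnorm_bounded: "\<exists>M. \<forall>u. sqnorm u \<le> M"
proof -
  obtain C where C: "\<forall>f\<in>ell2. ell2_norm (S f) \<le> C * ell2_norm f"
    using bounded unfolding ell2_bounded_def by blast
  have "sqrt (sqnorm u) \<le> C" for u
    using C evec_ell2[of u] norm_wshift_evec[of u] ell2_norm_evec[of u] by force
  hence "sqnorm u \<le> C\<^sup>2" for u
    using power_mono[of "sqrt (sqnorm u)" C 2] sqnorm_nonneg[of u] by simp
  thus ?thesis by blast
qed

subsection \<open>The adjoint\<close>

definition adj :: "('v \<Rightarrow> complex) \<Rightarrow> 'v \<Rightarrow> complex" where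
  "adj g u = (\<Sum>\<^sub>\<infinity>v\<in>Chi E u. cnj (lam v) * g v)"

lemma adj_summable: "g \<in> ell2 \<Longrightarrow> (\<lambda>v. cnj (lam v) * g v) summable_on Chi E u"
  by (rule abs_summable_summable)
    (simp add: norm_mult summable_on_mult_of_square_summable weights_square_summable
      ell2_square_summable_on)

lemma adj_square_le:
  assumes "g \<in> ell2"
  shows "(cmod (adj g u))\<^sup>2 \<le> sqnorm u * (\<Sum>\<^sub>\<infinity>v\<in>Chi E u. (cmod (g v))\<^sup>2)"
proof -
  have "cmod (adj g u) \<le> (\<Sum>\<^sub>\<infinity>v\<in>Chi E u. cmod (lam v) * cmod (g v))"
    unfolding adj_def using norm_infsum_bound[of "\<lambda>v. cnj (lam v) * g v" "Chi E u"]
    by (simp add: norm_mult summable_on_mult_of_square_summable weights_square_summable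
      ell2_square_summable_on assms)
  hence "(cmod (adj g u))\<^sup>2 \<le> (\<Sum>\<^sub>\<infinity>v\<in>Chi E u. cmod (lam v) * cmod (g v))\<^sup>2"
    by (intro power_mono) auto
  also have "\<dots> \<le> sqnorm u * (\<Sum>\<^sub>\<infinity>v\<in>Chi E u. (cmod (g v))\<^sup>2)"
    unfolding sqnorm_def
    by (intro infsum_Cauchy_Schwarz weights_square_summable ell2_square_summable_on assms) auto
  finally show ?thesis .
qed

lemma Chi_Sigma: "Sigma UNIV (Chi E) = E"
  by (auto simp: Chi_def)

lemma inj_on_snd_edges: "inj_on snd E"
  unfolding inj_on_def using parent_unique by auto

lemma has_sum_edges_iff:
  "((\<lambda>(u, v). h v) has_sum s) E \<longleftrightarrow> (h has_sum s) (Vcirc E)"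
proof -
  have "snd ` E = Vcirc E"
    unfolding Vcirc_def by force
  thus ?thesis
    using has_sum_reindex[OF inj_on_snd_edges, of h] by (simp add: o_def case_prod_unfold)
qed

lemma summable_on_edges_iff:
  "(\<lambda>(u, v). h v) summable_on E \<longleftrightarrow> h summable_on Vcirc E"
  unfolding summable_on_def has_sum_edges_iff ..

lemma infsum_edges: "(\<Sum>\<^sub>\<infinity>(u, v)\<in>E. h v) = (\<Sum>\<^sub>\<infinity>v\<in>Vcirc E. h v)"
proof (cases "h summable_on Vcirc E")
  case True
  thus ?thesis
    using has_sum_edges_iff by (blast intro: infsumI has_sum_infsum)
next
  case False
  hence "\<not> (\<lambda>(u, v). h v) summable_on E"
    using summable_on_edges_iff by blast
  hence "(\<Sum>\<^sub>\<infinity>(u, v)\<in>E. h v) = 0"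
    by (rule infsum_not_exists)
  also have "0 = (\<Sum>\<^sub>\<infinity>v\<in>Vcirc E. h v)"
    using False by (rule infsum_not_exists[symmetric])
  finally show ?thesis .
qed

lemma adj_ell2:
  assumes g: "g \<in> ell2"
  shows "adj g \<in> ell2"
proof -
  obtain M where M: "\<And>u. sqnorm u \<le> M"
    using sqnorm_bounded by blast
  have "(\<lambda>(u, v). (cmod (g v))\<^sup>2) summable_on Sigma UNIV (Chi E)"
    unfolding Chi_Sigma summable_on_edges_iff by (rule ell2_square_summable_on[OF g])
  hence "(\<lambda>u. M * (\<Sum>\<^sub>\<infinity>v\<in>Chi E u. (cmod (g v))\<^sup>2)) summable_on UNIV"
    by (intro summable_on_cmult_right summable_on_Sigma_banach)
  hence "(\<lambda>u. (cmod (adj g u))\<^sup>2) summable_on UNIV"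
  proof (rule summable_on_comparison_test)
    fix u
    have "(cmod (adj g u))\<^sup>2 \<le> sqnorm u * (\<Sum>\<^sub>\<infinity>v\<in>Chi E u. (cmod (g v))\<^sup>2)"
      using g by (rule adj_square_le)
    also have "\<dots> \<le> M * (\<Sum>\<^sub>\<infinity>v\<in>Chi E u. (cmod (g v))\<^sup>2)"
      using M by (intro mult_right_mono infsum_nonneg) auto
    finally show "(cmod (adj g u))\<^sup>2 \<le> M * (\<Sum>\<^sub>\<infinity>v\<in>Chi E u. (cmod (g v))\<^sup>2)" .
  qed simp
  thus ?thesis
    unfolding ell2_def by simp
qed

lemma wshift_adjoint_identity:
  assumes f: "f \<in> ell2" and g: "g \<in> ell2"
  shows "ell2_inner (S f) g = ell2_inner f (adj g)"
proof -
  let ?t = "\<lambda>u v. lam v * f u * cnj (g v)"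
  have edge: "?t u v = S f v * cnj (g v)" if "(u, v) \<in> E" for u v
    using that by (simp add: wshift_apply_edge)
  have "(\<lambda>v. S f v * cnj (g v)) summable_on Vcirc E"
    by (rule abs_summable_summable)
      (simp add: norm_mult summable_on_mult_of_square_summable ell2_square_summable_on
        wshift_ell2 f g)
  hence summable: "(\<lambda>(u, v). ?t u v) summable_on Sigma UNIV (Chi E)"
    unfolding Chi_Sigma summable_on_edges_iff[symmetric]
    by (rule summable_on_cong[THEN iffD1, rotated]) (auto simp: edge)
  have "ell2_inner (S f) g = (\<Sum>\<^sub>\<infinity>v\<in>Vcirc E. S f v * cnj (g v))"
    unfolding ell2_inner_def by (rule infsum_cong_neutral) (auto simp: wshift_def)
  also have "\<dots> = (\<Sum>\<^sub>\<infinity>(u, v)\<in>Sigma UNIV (Chi E). ?t u v)"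
    unfolding Chi_Sigma infsum_edges[symmetric] by (rule infsum_cong) (auto simp: edge)
  also have "\<dots> = (\<Sum>\<^sub>\<infinity>u. \<Sum>\<^sub>\<infinity>v\<in>Chi E u. ?t u v)"
    using infsum_Sigma'_banach[OF summable] ..
  also have "\<dots> = ell2_inner f (adj g)"
    unfolding ell2_inner_def adj_def
  proof (rule infsum_cong)
    fix u
    have "(\<Sum>\<^sub>\<infinity>v\<in>Chi E u. ?t u v) = (\<Sum>\<^sub>\<infinity>v\<in>Chi E u. f u * cnj (cnj (lam v) * g v))"
      by (simp add: algebra_simps)
    also have "\<dots> = f u * (\<Sum>\<^sub>\<infinity>v\<in>Chi E u. cnj (cnj (lam v) * g v))"
      using adj_summable[OF g, of u] by (intro infsum_cmult_right) (simp only: summable_on_cnj_iff)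
    also have "\<dots> = f u * cnj (\<Sum>\<^sub>\<infinity>v\<in>Chi E u. cnj (lam v) * g v)"
      by (simp only: infsum_cnj)
    finally show "(\<Sum>\<^sub>\<infinity>v\<in>Chi E u. ?t u v) = f u * cnj (\<Sum>\<^sub>\<infinity>v\<in>Chi E u. cnj (lam v) * g v)" .
  qed
  finally show ?thesis .
qed

lemma ell2_adj_wshift:
  assumes g: "g \<in> ell2"
  shows "ell2_adj S g = adj g"
  unfolding ell2_adj_def
proof (rule the_equality)
  show "adj g \<in> ell2 \<and> (\<forall>f\<in>ell2. ell2_inner (S f) g = ell2_inner f (adj g))"
    using adj_ell2 wshift_adjoint_identity g by blast
  fix h assume h: "h \<in> ell2 \<and> (\<forall>f\<in>ell2. ell2_inner (S f) g = ell2_inner f h)"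
  show "h = adj g"
  proof
    fix w
    have "cnj (h w) = ell2_inner (S (evec w)) g"
      using h evec_ell2[of w] by (simp add: ell2_inner_evec_left)
    also have "\<dots> = cnj (adj g w)"
      using wshift_adjoint_identity[OF evec_ell2 g] by (simp add: ell2_inner_evec_left)
    finally show "h w = adj g w" by simp
  qed
qed

lemma adj_wshift: "adj (S g) = (\<lambda>u. complex_of_real (sqnorm u) * g u)"
proof
  fix u
  have "adj (S g) u = (\<Sum>\<^sub>\<infinity>v\<in>Chi E u. complex_of_real ((cmod (lam v))\<^sup>2) * g u)"
    unfolding adj_def
  proof (rule infsum_cong)
    fix v assume "v \<in> Chi E u"
    hence "cnj (lam v) * S g v = (cnj (lam v) * lam v) * g u"
      by (simp add: Chi_def wshift_apply_edge)
    also have "cnj (lam v) * lam v = complex_of_real ((cmod (lam v))\<^sup>2)"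
      using complex_norm_square[of "lam v"] by (simp add: mult.commute)
    finally show "cnj (lam v) * S g v = complex_of_real ((cmod (lam v))\<^sup>2) * g u" .
  qed
  also have "\<dots> = (\<Sum>\<^sub>\<infinity>v\<in>Chi E u. complex_of_real ((cmod (lam v))\<^sup>2)) * g u"
    by (rule infsum_cmult_left) (intro summable_on_of_real weights_square_summable)
  also have "(\<Sum>\<^sub>\<infinity>v\<in>Chi E u. complex_of_real ((cmod (lam v))\<^sup>2)) = complex_of_real (sqnorm u)"
    unfolding sqnorm_def
    by (rule infsumI, rule has_sum_of_real, rule has_sum_infsum, rule weights_square_summable)
  finally show "adj (S g) u = complex_of_real (sqnorm u) * g u" .
qed

subsection \<open>Invariance of the kernel of the adjoint\<close>

definition equal_sibling_norms :: bool where
  "equal_sibling_norms \<longleftrightarrow>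
     (\<forall>w v1 v2. (w, v1) \<in> E \<longrightarrow> (w, v2) \<in> E \<longrightarrow> lam v1 \<noteq> 0 \<longrightarrow> lam v2 \<noteq> 0 \<longrightarrow>
        sqnorm v1 = sqnorm v2)"

lemma ker_adj_wshift_iff: "g \<in> ell2_ker (ell2_adj S) \<longleftrightarrow> g \<in> ell2 \<and> adj g = (\<lambda>_. 0)"
  unfolding ell2_ker_def using ell2_adj_wshift by auto

lemma adj_scaled_eq_zero:
  assumes equal: equal_sibling_norms and g: "g \<in> ell2" and adj_zero: "adj g u = 0"
  shows "adj (\<lambda>v. complex_of_real (sqnorm v) * g v) u = 0"
proof (cases "\<exists>v0\<in>Chi E u. lam v0 \<noteq> 0")
  case True
  then obtain v0 where v0: "v0 \<in> Chi E u" "lam v0 \<noteq> 0"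
    by blast
  have "adj (\<lambda>v. complex_of_real (sqnorm v) * g v) u
        = (\<Sum>\<^sub>\<infinity>v\<in>Chi E u. complex_of_real (sqnorm v0) * (cnj (lam v) * g v))"
    unfolding adj_def
  proof (rule infsum_cong)
    fix v assume "v \<in> Chi E u"
    hence "lam v = 0 \<or> sqnorm v = sqnorm v0"
      using equal v0 unfolding equal_sibling_norms_def Chi_def by blast
    thus "cnj (lam v) * (complex_of_real (sqnorm v) * g v)
          = complex_of_real (sqnorm v0) * (cnj (lam v) * g v)"
      by auto
  qed
  also have "\<dots> = complex_of_real (sqnorm v0) * adj g u"
    unfolding adj_def by (rule infsum_cmult_right) (rule adj_summable[OF g])
  finally show ?thesis
    using adj_zero by simp
next
  case False
  thus ?thesis
    unfolding adj_def by (simp add: infsum_0)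
qed

lemma kernel_not_invariant_if_unequal_sibling_norms:
  assumes "\<not> equal_sibling_norms"
  shows "\<exists>g\<in>ell2. adj g = (\<lambda>_. 0) \<and> adj (\<lambda>u. complex_of_real (sqnorm u) * g u) \<noteq> (\<lambda>_. 0)"
proof -
  obtain w v1 v2 where e1: "(w, v1) \<in> E" and e2: "(w, v2) \<in> E"
    and l1: "lam v1 \<noteq> 0" and l2: "lam v2 \<noteq> 0" and unequal: "sqnorm v1 \<noteq> sqnorm v2"
    using assms unfolding equal_sibling_norms_def by blast
  have distinct: "v1 \<noteq> v2"
    using unequal by blast
  have siblings: "Chi E u \<inter> {v1, v2} = (if u = w then {v1, v2} else {})" for u
  proof (cases "u = w")
    case False
    hence "v1 \<notin> Chi E u" "v2 \<notin> Chi E u"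
      using parent_unique e1 e2 unfolding Chi_def by blast+
    thus ?thesis
      using False by auto
  qed (use e1 e2 in \<open>auto simp: Chi_def\<close>)
  have adj_supported:
    "adj k u = (if u = w then cnj (lam v1) * k v1 + cnj (lam v2) * k v2 else 0)"
    if "\<And>v. v \<notin> {v1, v2} \<Longrightarrow> k v = 0" for k u
  proof -
    have "adj k u = (\<Sum>v\<in>Chi E u \<inter> {v1, v2}. cnj (lam v) * k v)"
      unfolding adj_def by (rule infsum_finite_support) (auto simp: that)
    thus ?thesis
      unfolding siblings using distinct by simp
  qed
  define g where
    "g v = (if v = v1 then 1 / cnj (lam v1) else if v = v2 then - 1 / cnj (lam v2) else 0)" for v
  have g_supported: "\<And>v. v \<notin> {v1, v2} \<Longrightarrow> g v = 0"
    unfolding g_def by auto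
  have "g \<in> ell2"
    using g_supported by (intro ell2_finite_support[of "{v1, v2}"]) auto
  moreover have "adj g u = 0" for u
  proof -
    have "adj g u = (if u = w then cnj (lam v1) * g v1 + cnj (lam v2) * g v2 else 0)"
      by (rule adj_supported[OF g_supported])
    also have "\<dots> = 0"
      using distinct l1 l2 by (simp add: g_def)
    finally show ?thesis .
  qed
  moreover have "adj (\<lambda>u. complex_of_real (sqnorm u) * g u) w \<noteq> 0"
  proof -
    have "adj (\<lambda>u. complex_of_real (sqnorm u) * g u) w
          = cnj (lam v1) * (sqnorm v1 * g v1) + cnj (lam v2) * (sqnorm v2 * g v2)"
      using g_supported by (subst adj_supported) auto
    also have "\<dots> = complex_of_real (sqnorm v1) - complex_of_real (sqnorm v2)"
      using distinct l1 l2 by (simp add: g_def)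
    finally show ?thesis
      using unequal by simp
  qed
  ultimately show ?thesis
    by fastforce
qed

theorem kernel_invariant_iff_equal_sibling_norms:
  "(\<forall>g\<in>ell2_ker (ell2_adj S). ell2_adj S (S g) \<in> ell2_ker (ell2_adj S))
     \<longleftrightarrow> equal_sibling_norms"
proof -
  have "ell2_adj S (S g) \<in> ell2_ker (ell2_adj S)
          \<longleftrightarrow> adj (\<lambda>u. complex_of_real (sqnorm u) * g u) = (\<lambda>_. 0)"
    if g: "g \<in> ell2" for g
  proof -
    have "ell2_adj S (S g) = (\<lambda>u. complex_of_real (sqnorm u) * g u)"
      using ell2_adj_wshift[OF wshift_ell2[OF g]] adj_wshift by simp
    moreover have "(\<lambda>u. complex_of_real (sqnorm u) * g u) \<in> ell2"
      using adj_ell2[OF wshift_ell2[OF g]] adj_wshift by simp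
    ultimately show ?thesis
      using ker_adj_wshift_iff by simp
  qed
  hence "(\<forall>g\<in>ell2_ker (ell2_adj S). ell2_adj S (S g) \<in> ell2_ker (ell2_adj S))
      \<longleftrightarrow> (\<forall>g\<in>ell2. adj g = (\<lambda>_. 0) \<longrightarrow> adj (\<lambda>u. complex_of_real (sqnorm u) * g u) = (\<lambda>_. 0))"
    using ker_adj_wshift_iff by blast
  also have "\<dots> \<longleftrightarrow> equal_sibling_norms"
  proof
    assume "\<forall>g\<in>ell2. adj g = (\<lambda>_. 0) \<longrightarrow> adj (\<lambda>u. complex_of_real (sqnorm u) * g u) = (\<lambda>_. 0)"
    thus equal_sibling_norms
      using kernel_not_invariant_if_unequal_sibling_norms by blast
  qed (use adj_scaled_eq_zero in fastforce)
  finally show ?thesis .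
qed

lemma equal_sibling_norms_if_parent_function:
  assumes "\<forall>u\<in>Vcirc E. lam u \<noteq> 0 \<longrightarrow> ell2_norm (S (evec u)) = \<alpha> (par E u)"
  shows equal_sibling_norms
  unfolding equal_sibling_norms_def
proof (intro allI impI)
  fix w v1 v2 assume "(w, v1) \<in> E" "(w, v2) \<in> E" "lam v1 \<noteq> 0" "lam v2 \<noteq> 0"
  hence "sqrt (sqnorm v1) = \<alpha> w" and "sqrt (sqnorm v2) = \<alpha> w"
    using assms by (auto simp: Vcirc_def par_eq norm_wshift_evec)
  thus "sqnorm v1 = sqnorm v2"
    by (metis real_sqrt_eq_iff)
qed

lemma parent_function_if_equal_sibling_norms:
  assumes equal_sibling_norms
  shows "\<exists>\<alpha>. (\<forall>v. \<alpha> v \<ge> 0) \<and>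
           (\<forall>u\<in>Vcirc E. lam u \<noteq> 0 \<longrightarrow> ell2_norm (S (evec u)) = \<alpha> (par E u))"
proof (intro exI conjI allI ballI impI)
  let ?\<alpha> = "\<lambda>w. ell2_norm (S (evec (SOME v. (w, v) \<in> E \<and> lam v \<noteq> 0)))"
  show "?\<alpha> v \<ge> 0" for v
    by (simp add: norm_wshift_evec sqnorm_nonneg)
  fix u assume u: "u \<in> Vcirc E" and "lam u \<noteq> 0"
  hence "(par E u, u) \<in> E \<and> lam u \<noteq> 0"
    using Vcirc_iff by blast
  hence "sqnorm u = sqnorm (SOME v. (par E u, v) \<in> E \<and> lam v \<noteq> 0)"
    using someI[of "\<lambda>v. (par E u, v) \<in> E \<and> lam v \<noteq> 0"] assms
    unfolding equal_sibling_norms_def by blast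
  thus "ell2_norm (S (evec u)) = ?\<alpha> (par E u)"
    by (simp add: norm_wshift_evec)
qed

end

theorem mainTheorem13:
  fixes E :: "('v \<times> 'v) set" and lam :: "'v \<Rightarrow> complex"
  assumes tree: "directed_tree E"
    and bdd: "ell2_bounded (wshift E lam)"
  shows "((\<forall>g\<in>ell2_ker (ell2_adj (wshift E lam)).
             ell2_adj (wshift E lam) (wshift E lam g) \<in> ell2_ker (ell2_adj (wshift E lam)))
          \<longleftrightarrow> (\<exists>\<alpha>::'v \<Rightarrow> real. (\<forall>v\<in>Vplus E lam. \<alpha> v \<ge> 0) \<and>
                 (\<forall>u\<in>Vcirc E. lam u \<noteq> 0 \<longrightarrow> ell2_norm (wshift E lam (evec u)) = \<alpha> (par E u))))
       \<and> (leafless E \<and> (\<forall>v\<in>Vcirc E. lam v \<noteq> 0) \<longrightarrow>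
          ((\<forall>g\<in>ell2_ker (ell2_adj (wshift E lam)).
             ell2_adj (wshift E lam) (wshift E lam g) \<in> ell2_ker (ell2_adj (wshift E lam)))
          \<longleftrightarrow> (\<exists>\<alpha>::'v \<Rightarrow> real. (\<forall>v. \<alpha> v \<ge> 0) \<and>
                 (\<forall>u\<in>Vcirc E. ell2_norm (wshift E lam (evec u)) = \<alpha> (par E u)))))"
proof -
  interpret bounded_weighted_shift E lam
    using directed_tree_parent_unique[OF tree] bdd by unfold_locales
  let ?invariant = "\<forall>g\<in>ell2_ker (ell2_adj S). ell2_adj S (S g) \<in> ell2_ker (ell2_adj S)"
  have "?invariant \<longleftrightarrow> (\<exists>\<alpha>::'v \<Rightarrow> real. (\<forall>v\<in>Vplus E lam. \<alpha> v \<ge> 0) \<and>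
                 (\<forall>u\<in>Vcirc E. lam u \<noteq> 0 \<longrightarrow> ell2_norm (S (evec u)) = \<alpha> (par E u)))"
    unfolding kernel_invariant_iff_equal_sibling_norms
    using equal_sibling_norms_if_parent_function parent_function_if_equal_sibling_norms
    by (metis (no_types, lifting))
  moreover have "?invariant \<longleftrightarrow> (\<exists>\<alpha>::'v \<Rightarrow> real. (\<forall>v. \<alpha> v \<ge> 0) \<and>
                 (\<forall>u\<in>Vcirc E. ell2_norm (S (evec u)) = \<alpha> (par E u)))"
    if nonzero: "\<forall>v\<in>Vcirc E. lam v \<noteq> 0"
    unfolding kernel_invariant_iff_equal_sibling_norms
    using equal_sibling_norms_if_parent_function parent_function_if_equal_sibling_norms nonzero
    by (metis (no_types, lifting))
  ultimately show ?thesis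
    by blast
qed

end
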